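(* Let $U:\mathcal{Z}^*\to[0,1]$ be a potential that is $\beta(k)$-deletion stable, $\mathcal{D}$ a distribution on $\mathcal{Z}$, $m\in\mathbb{N}$, $Z\subseteq\mathcal{Z}$ finite nonempty, $\varepsilon>0$, $\delta\in(0,1)$. Let $w_1,\dots,w_m>0$ with $\sum_k w_k=1$, and let $T\in\mathbb{N}$ be such that each $T_k:=w_kT$ is an integer. For each $k\in[m]$ and $t\in[T_k]$ draw independently $S_{k,t}\sim\mathcal{D}^{k-1}$, and for $z\in Z$ set $$\hat\nu_T(z)=\frac1T\sum_{k=1}^m\sum_{t=1}^{T_k}\frac{U(S_{k,t}\cup\{z\})-U(S_{k,t})}{w_k\,m}.$$ Then $\mathbb{E}[\hat\nu_T(z)]=\nu(z;U,\mathcal{D},m)$ for all $z\in Z$, and if $$T\ge\frac{2\ln(2|Z|/\delta)}{\varepsilon^2m^2}\sum_{k=1}^m\frac{\beta(k)^2}{w_k},$$ then with probability at least $1-\delta$, $|\hat\nu_T(z)-\nu(z;U,\mathcal{D},m)|\le\varepsilon$ for all $z\in Z$.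
   Context: $\mathcal{Z}^*=\bigcup_{n\ge0}\mathcal{Z}^n$; a potential is a measurable, permutation-invariant $U:\mathcal{Z}^*\to[0,1]$; $S\cup\{z\}$ is the tuple $S$ with $z$ appended. For non-increasing $\beta:\mathbb{N}\to[0,1]$, $U$ is $\beta(k)$-deletion stable if for all $k\in\mathbb{N}$, $S\in\mathcal{Z}^{k-1}$, $z\in\mathcal{Z}$: $|U(S\cup\{z\})-U(S)|\le\beta(k)$. Data Shapley value of entry $b_i$ in $B=(b_1,\dots,b_m)$: $\phi(b_i;U,B)=\frac1m\sum_{k=1}^m\binom{m-1}{k-1}^{-1}\sum_{I\subseteq[m]\setminus\{i\},|I|=k-1}(U(B_I\cup\{b_i\})-U(B_I))$. Distributional Shapley value: $\nu(z;U,\mathcal{D},m)=\mathbb{E}_{B\sim\mathcal{D}^{m-1}}[\phi(z;U,B\cup\{z\})]$ with $B$ i.i.d. from $\mathcal{D}$. *)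

theory Defs
  imports "HOL-Probability.Probability"
begin

text \<open>Tuples in Z^* are lists; S \<union> {z} is S @ [z]. The product sigma-algebra on Z^n
  is PiM {..<n} (\<lambda>_. D).\<close>

definition potential :: "'z measure \<Rightarrow> ('z list \<Rightarrow> real) \<Rightarrow> bool" where
  "potential D U \<longleftrightarrow>
     (\<forall>xs\<in>lists (space D). 0 \<le> U xs \<and> U xs \<le> 1) \<and>
     (\<forall>xs ys. xs \<in> lists (space D) \<longrightarrow> mset xs = mset ys \<longrightarrow> U xs = U ys) \<and>
     (\<forall>n. (\<lambda>f. U (map f [0..<n])) \<in> borel_measurable (PiM {..<n} (\<lambda>_. D)))"

definition deletion_stable :: "'z measure \<Rightarrow> ('z list \<Rightarrow> real) \<Rightarrow> (nat \<Rightarrow> real) \<Rightarrow> bool" where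
  "deletion_stable D U \<beta> \<longleftrightarrow>
     (\<forall>k\<ge>1. \<forall>S\<in>lists (space D). \<forall>z\<in>space D.
        length S = k - 1 \<longrightarrow> \<bar>U (S @ [z]) - U S\<bar> \<le> \<beta> k)"

text \<open>Data Shapley value of entry number i (0-based) of B; B_I = nths B I.\<close>
definition data_shapley :: "('z list \<Rightarrow> real) \<Rightarrow> 'z list \<Rightarrow> nat \<Rightarrow> real" where
  "data_shapley U B i =
     (let m = length B in
      (1 / real m) * (\<Sum>k\<in>{1..m}. inverse (real ((m - 1) choose (k - 1))) *
         (\<Sum>I | I \<subseteq> {..<m} - {i} \<and> card I = k - 1. U (nths B I @ [B ! i]) - U (nths B I))))"

text \<open>Distributional Shapley value: B ~ D^(m-1), z appended as last entry.\<close>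
definition dist_shapley :: "('z list \<Rightarrow> real) \<Rightarrow> 'z measure \<Rightarrow> nat \<Rightarrow> 'z \<Rightarrow> real" where
  "dist_shapley U D m z =
     (\<integral>f. data_shapley U (map f [0..<m - 1] @ [z]) (m - 1) \<partial>(PiM {..<m - 1} (\<lambda>_. D)))"

text \<open>Index set of all i.i.d. coordinates: coordinate (k,t,j) is entry j of S_{k,t}.\<close>
definition sample_index :: "nat \<Rightarrow> (nat \<Rightarrow> nat) \<Rightarrow> (nat \<times> nat \<times> nat) set" where
  "sample_index m Tk = {(k, t, j). k \<in> {1..m} \<and> t < Tk k \<and> j < k - 1}"

definition sample_space :: "'z measure \<Rightarrow> nat \<Rightarrow> (nat \<Rightarrow> nat) \<Rightarrow> ((nat \<times> nat \<times> nat) \<Rightarrow> 'z) measure" where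
  "sample_space D m Tk = PiM (sample_index m Tk) (\<lambda>_. D)"

definition sample_S :: "((nat \<times> nat \<times> nat) \<Rightarrow> 'z) \<Rightarrow> nat \<Rightarrow> nat \<Rightarrow> 'z list" where
  "sample_S \<omega> k t = map (\<lambda>j. \<omega> (k, t, j)) [0..<k - 1]"

definition shapley_estimator ::
  "('z list \<Rightarrow> real) \<Rightarrow> nat \<Rightarrow> nat \<Rightarrow> (nat \<Rightarrow> nat) \<Rightarrow> (nat \<Rightarrow> real) \<Rightarrow> 'z
     \<Rightarrow> ((nat \<times> nat \<times> nat) \<Rightarrow> 'z) \<Rightarrow> real" where
  "shapley_estimator U m T Tk w z \<omega> =
     (1 / real T) * (\<Sum>k\<in>{1..m}. \<Sum>t<Tk k.
        (U (sample_S \<omega> k t @ [z]) - U (sample_S \<omega> k t)) / (w k * real m))"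

end

theory Submission
  imports Defs
begin

text \<open>Grouping the subsets in the data Shapley value by size, and using that a
  sub-sample of i.i.d. coordinates is again i.i.d., the distributional Shapley value is
  \<open>(1/m) \<Sum>k. E[U (S @ [z]) - U S]\<close> with \<open>S ~ D^(k-1)\<close>; as \<open>T_k = w_k T\<close>, the \<open>k\<close>-th group of
  the estimator has exactly the \<open>k\<close>-th term as mean. The summands of the estimator are functions of
  pairwise disjoint sets of coordinates of the sample, hence independent, and by deletion
  stability the \<open>(k, t)\<close>-th one is bounded by \<open>\<beta> k / (T w_k m)\<close> in absolute value. Hoeffding's
  inequality bounds the probability of a deviation larger than \<open>\<epsilon>\<close> at each \<open>z\<close> by
  \<open>\<delta> / |Z|\<close>, and a union bound over \<open>Z\<close> concludes.\<close>

section \<open>Product measures and independence\<close>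

lemma
  fixes F :: "(nat \<Rightarrow> 'z) \<Rightarrow> real" and e :: "nat \<Rightarrow> 'i"
  assumes D: "prob_space D" and inj: "inj_on e {..<n}" and e: "e ` {..<n} \<subseteq> J"
    and F: "F \<in> borel_measurable (PiM {..<n} (\<lambda>_. D))"
    and F_local: "\<And>g h. (\<And>j. j < n \<Longrightarrow> g j = h j) \<Longrightarrow> F g = F h"
  shows measurable_PiM_reindex: "(\<lambda>\<omega>. F (\<lambda>j. \<omega> (e j))) \<in> borel_measurable (PiM J (\<lambda>_. D))"
    and integral_PiM_reindex:
      "(\<integral>\<omega>. F (\<lambda>j. \<omega> (e j)) \<partial>PiM J (\<lambda>_. D)) = (\<integral>g. F g \<partial>PiM {..<n} (\<lambda>_. D))"
proof -
  let ?T = "\<lambda>\<omega>. \<lambda>j\<in>{..<n}. \<omega> (e j)"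
  have T: "?T \<in> measurable (PiM J (\<lambda>_. D)) (PiM {..<n} (\<lambda>_. D))"
    using e by (intro measurable_restrict) auto
  have F_T: "F (\<lambda>j. \<omega> (e j)) = F (?T \<omega>)" for \<omega>
    by (rule F_local) auto
  show "(\<lambda>\<omega>. F (\<lambda>j. \<omega> (e j))) \<in> borel_measurable (PiM J (\<lambda>_. D))"
    unfolding F_T using T F by measurable
  have "distr (PiM J (\<lambda>_. D)) (PiM {..<n} (\<lambda>_. D)) ?T = PiM {..<n} (\<lambda>_. D)"
    using distr_PiM_reindex[of J "\<lambda>_. D" e "{..<n}"] D inj e by auto
  then show "(\<integral>\<omega>. F (\<lambda>j. \<omega> (e j)) \<partial>PiM J (\<lambda>_. D)) = (\<integral>g. F g \<partial>PiM {..<n} (\<lambda>_. D))"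
    unfolding F_T by (metis integral_distr[OF T F])
qed

lemma indep_vars_PiM_coordinates:
  assumes "prob_space D"
  shows "prob_space.indep_vars (PiM J (\<lambda>_. D)) (\<lambda>_. D) (\<lambda>i \<omega>. \<omega> i) J"
proof -
  interpret P: prob_space "PiM J (\<lambda>_. D)"
    using assms by (intro prob_space_PiM) auto
  show ?thesis
  proof (cases "J = {}")
    case True
    have "P.indep_vars (\<lambda>_. D) (\<lambda>i \<omega>. \<omega> i) {}"
      by (simp add: P.indep_vars_def P.indep_sets_def)
    with True show ?thesis by simp
  next
    case False
    have coordinate: "(\<lambda>\<omega>. \<omega> i) \<in> measurable (PiM J (\<lambda>_. D)) D" if "i \<in> J" for i
      using measurable_component_singleton[OF that, of "\<lambda>_. D"] by simp
    have "distr (PiM J (\<lambda>_. D)) (PiM J (\<lambda>_. D)) (\<lambda>x. \<lambda>i\<in>J. x i) = PiM J (\<lambda>_. D)"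
      by (subst distr_cong[where g = "\<lambda>x. x"]) (auto simp: space_PiM)
    also have "\<dots> = PiM J (\<lambda>i. distr (PiM J (\<lambda>_. D)) D (\<lambda>\<omega>. \<omega> i))"
      using distr_PiM_component[of J "\<lambda>_. D"] assms by (intro PiM_cong) auto
    finally show ?thesis
      using P.indep_vars_iff_distr_eq_PiM'[OF False coordinate] by simp
  qed
qed

lemma indep_vars_PiM_blocks:
  fixes K :: "'p \<Rightarrow> 'i set" and X :: "'p \<Rightarrow> ('i \<Rightarrow> 'z) \<Rightarrow> real"
  assumes D: "prob_space D" and K: "\<And>p. p \<in> P \<Longrightarrow> K p \<subseteq> J"
    and disjoint: "disjoint_family_on K P"
    and Y: "\<And>p. p \<in> P \<Longrightarrow> Y p \<in> borel_measurable (PiM (K p) (\<lambda>_. D))"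
    and X: "\<And>p \<omega>. p \<in> P \<Longrightarrow> X p \<omega> = Y p (restrict \<omega> (K p))"
  shows "prob_space.indep_vars (PiM J (\<lambda>_. D)) (\<lambda>_. borel) X P"
proof -
  interpret prob_space "PiM J (\<lambda>_. D)"
    using D by (intro prob_space_PiM) auto
  have "indep_vars (\<lambda>p. PiM (K p) (\<lambda>_. D)) (\<lambda>p \<omega>. restrict \<omega> (K p)) P"
    using indep_vars_restrict[OF indep_vars_PiM_coordinates[OF D] K disjoint] by simp
  then have "indep_vars (\<lambda>_. borel) (\<lambda>p \<omega>. Y p (restrict \<omega> (K p))) P"
    by (rule indep_vars_compose2) (rule Y)
  moreover have "indep_vars (\<lambda>_. borel) (\<lambda>p \<omega>. Y p (restrict \<omega> (K p))) P
      \<longleftrightarrow> indep_vars (\<lambda>_. borel) X P"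
    by (rule indep_vars_cong) (auto simp: X)
  ultimately show ?thesis by simp
qed

lemma (in prob_space) prob_all_ge_one_minus_sum:
  assumes "finite Z" and "\<And>z. z \<in> Z \<Longrightarrow> {x \<in> space M. P z x} \<in> events"
  shows "1 - (\<Sum>z\<in>Z. prob {x \<in> space M. \<not> P z x}) \<le> prob {x \<in> space M. \<forall>z\<in>Z. P z x}"
proof -
  have events: "{x \<in> space M. \<not> P z x} \<in> events" if "z \<in> Z" for z
  proof -
    have "{x \<in> space M. \<not> P z x} = space M - {x \<in> space M. P z x}"
      by auto
    then show ?thesis using assms(2)[OF that] by auto
  qed
  have union: "(\<Union>z\<in>Z. {x \<in> space M. \<not> P z x}) \<in> events"
    using assms(1) events by auto
  have "prob (\<Union>z\<in>Z. {x \<in> space M. \<not> P z x}) \<le> (\<Sum>z\<in>Z. prob {x \<in> space M. \<not> P z x})"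
    using assms(1) events by (intro finite_measure_subadditive_finite) auto
  moreover have "{x \<in> space M. \<forall>z\<in>Z. P z x} = space M - (\<Union>z\<in>Z. {x \<in> space M. \<not> P z x})"
    by auto
  ultimately show ?thesis
    using prob_compl[OF union] by simp
qed

text \<open>Phrased with an arbitrary \<open>L \<le> \<epsilon>\<^sup>2 / (2 \<Sum>i. c i\<^sup>2)\<close> rather than with the quotient itself, so
  that the degenerate case \<open>\<Sum>i. c i\<^sup>2 = 0\<close>, not covered by the library version, is included.\<close>
lemma (in prob_space) Hoeffding_ineq_abs_bounded:
  fixes X :: "'i \<Rightarrow> 'a \<Rightarrow> real"
  assumes fin: "finite I" and indep: "indep_vars (\<lambda>_. borel) X I"
    and bound: "\<And>i x. i \<in> I \<Longrightarrow> x \<in> space M \<Longrightarrow> \<bar>X i x\<bar> \<le> c i"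
    and \<epsilon>: "\<epsilon> > 0" and L: "2 * (\<Sum>i\<in>I. (c i)\<^sup>2) * L \<le> \<epsilon>\<^sup>2"
  shows "prob {x \<in> space M. \<bar>(\<Sum>i\<in>I. X i x) - (\<Sum>i\<in>I. expectation (X i))\<bar> \<ge> \<epsilon>}
           \<le> 2 * exp (- L)"
proof (cases "(\<Sum>i\<in>I. (c i)\<^sup>2) = 0")
  case True
  then have "c i = 0" if "i \<in> I" for i
    using sum_nonneg_eq_0_iff[OF fin, of "\<lambda>i. (c i)\<^sup>2"] that by simp
  then have X0: "X i x = 0" if "i \<in> I" "x \<in> space M" for i x
    using bound[OF that] that by simp
  have "expectation (X i) = 0" if "i \<in> I" for i
  proof -
    have "expectation (X i) = expectation (\<lambda>_. 0)"
      by (rule Bochner_Integration.integral_cong) (auto simp: X0 that)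
    then show ?thesis by simp
  qed
  then have empty: "{x \<in> space M. \<bar>(\<Sum>i\<in>I. X i x) - (\<Sum>i\<in>I. expectation (X i))\<bar> \<ge> \<epsilon>} = {}"
    using X0 \<epsilon> by auto
  show ?thesis
    by (simp only: empty measure_empty) simp
next
  case False
  then have pos: "(\<Sum>i\<in>I. (c i)\<^sup>2) > 0"
    by (simp add: order_less_le sum_nonneg)
  interpret Hoeffding_ineq M I X "\<lambda>i. - c i" c "\<Sum>i\<in>I. expectation (X i)"
  proof unfold_locales
    fix i assume "i \<in> I"
    show "AE x in M. X i x \<in> {- c i..c i}"
      using bound[OF \<open>i \<in> I\<close>] by (intro AE_I2) (auto simp: abs_le_iff minus_le_iff)
  qed (use fin indep in simp_all)
  have width: "(\<Sum>i\<in>I. (c i - - c i)\<^sup>2) = 4 * (\<Sum>i\<in>I. (c i)\<^sup>2)"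
    by (simp add: sum_distrib_left power2_eq_square algebra_simps)
  have "L \<le> 2 * \<epsilon>\<^sup>2 / (4 * (\<Sum>i\<in>I. (c i)\<^sup>2))"
    using L pos by (simp add: pos_le_divide_eq mult.commute)
  then have exp_le: "exp (- 2 * \<epsilon>\<^sup>2 / (\<Sum>i\<in>I. (c i - - c i)\<^sup>2)) \<le> exp (- L)"
    unfolding width by simp
  have "(\<Sum>i\<in>I. (c i - - c i)\<^sup>2) > 0"
    unfolding width using pos by simp
  then have "prob {x \<in> space M. \<bar>(\<Sum>i\<in>I. X i x) - (\<Sum>i\<in>I. expectation (X i))\<bar> \<ge> \<epsilon>}
      \<le> 2 * exp (- 2 * \<epsilon>\<^sup>2 / (\<Sum>i\<in>I. (c i - - c i)\<^sup>2))"
    using Hoeffding_ineq_abs_ge[of \<epsilon>] \<epsilon> by simp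
  with exp_le show ?thesis
    by linarith
qed

section \<open>Marginal contributions\<close>

lemma set_nths_upt: "I \<subseteq> {..<n} \<Longrightarrow> set (nths [0..<n] I) = I"
  by (force simp: set_nths)

lemma length_nths_upt: "I \<subseteq> {..<n} \<Longrightarrow> length (nths [0..<n] I) = card I"
  by (metis distinct_card distinct_nthsI distinct_upt set_nths_upt)

lemma nths_append_singleton: "I \<subseteq> {..<length xs} \<Longrightarrow> nths (xs @ [z]) I = nths xs I"
  by (auto simp: nths_append)

lemma potential_bounds:
  assumes "potential D U" and "xs \<in> lists (space D)"
  shows "0 \<le> U xs" and "U xs \<le> 1"
  using assms unfolding potential_def by blast+

lemma measurable_potential:
  "potential D U \<Longrightarrow> (\<lambda>g. U (map g [0..<n])) \<in> borel_measurable (PiM {..<n} (\<lambda>_. D))"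
  unfolding potential_def by blast

lemma measurable_potential_snoc:
  assumes U: "potential D U" and z: "z \<in> space D"
  shows "(\<lambda>g. U (map g [0..<n] @ [z])) \<in> borel_measurable (PiM {..<n} (\<lambda>_. D))"
proof -
  let ?extend = "\<lambda>g. \<lambda>i\<in>{..<Suc n}. if i < n then g i else z"
  have "?extend \<in> measurable (PiM {..<n} (\<lambda>_. D)) (PiM {..<Suc n} (\<lambda>_. D))"
  proof (intro measurable_restrict)
    fix i assume "i \<in> {..<Suc n}"
    then show "(\<lambda>g. if i < n then g i else z) \<in> measurable (PiM {..<n} (\<lambda>_. D)) D"
      using z by (cases "i < n") auto
  qed
  from measurable_comp[OF this measurable_potential[OF U, of "Suc n"]]
  have "(\<lambda>g. U (map (?extend g) [0..<Suc n])) \<in> borel_measurable (PiM {..<n} (\<lambda>_. D))"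
    by (simp only: comp_def)
  moreover have "(\<lambda>g. U (map (?extend g) [0..<Suc n])) = (\<lambda>g. U (map g [0..<n] @ [z]))"
    by (intro ext arg_cong[where f = U]) simp
  ultimately show ?thesis
    by (simp only:)
qed

definition marginal :: "('z list \<Rightarrow> real) \<Rightarrow> 'z \<Rightarrow> nat \<Rightarrow> (nat \<Rightarrow> 'z) \<Rightarrow> real" where
  "marginal U z n g = U (map g [0..<n] @ [z]) - U (map g [0..<n])"

definition expected_marginal :: "('z list \<Rightarrow> real) \<Rightarrow> 'z measure \<Rightarrow> 'z \<Rightarrow> nat \<Rightarrow> real" where
  "expected_marginal U D z n = (\<integral>g. marginal U z n g \<partial>PiM {..<n} (\<lambda>_. D))"

lemma measurable_marginal:
  "potential D U \<Longrightarrow> z \<in> space D \<Longrightarrow> marginal U z n \<in> borel_measurable (PiM {..<n} (\<lambda>_. D))"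
  unfolding marginal_def[abs_def]
  by (intro borel_measurable_diff measurable_potential_snoc measurable_potential)

lemma marginal_cong:
  assumes "\<And>j. j < n \<Longrightarrow> g j = h j"
  shows "marginal U z n g = marginal U z n h"
proof -
  have "map g [0..<n] = map h [0..<n]"
    using assms by simp
  then show ?thesis
    unfolding marginal_def by (simp only:)
qed

lemma abs_marginal_le_1:
  assumes "potential D U" "z \<in> space D" "\<And>j. j < n \<Longrightarrow> g j \<in> space D"
  shows "\<bar>marginal U z n g\<bar> \<le> 1"
proof -
  have "map g [0..<n] \<in> lists (space D)" "map g [0..<n] @ [z] \<in> lists (space D)"
    using assms by auto
  from potential_bounds[OF assms(1) this(1)] potential_bounds[OF assms(1) this(2)]
  show ?thesis
    unfolding marginal_def by linarith
qed

lemma abs_marginal_le_stability: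
  assumes "deletion_stable D U \<beta>" "z \<in> space D" "\<And>j. j < n \<Longrightarrow> g j \<in> space D"
  shows "\<bar>marginal U z n g\<bar> \<le> \<beta> (Suc n)"
proof -
  have "map g [0..<n] \<in> lists (space D)" and "length (map g [0..<n]) = Suc n - 1"
    using assms(3) by auto
  moreover have "\<forall>k\<ge>1. \<forall>S\<in>lists (space D). \<forall>z\<in>space D.
      length S = k - 1 \<longrightarrow> \<bar>U (S @ [z]) - U S\<bar> \<le> \<beta> k"
    using assms(1) unfolding deletion_stable_def by blast
  ultimately show ?thesis
    unfolding marginal_def using assms(2) by auto
qed

lemma
  assumes D: "prob_space D" and U: "potential D U" and z: "z \<in> space D"
    and inj: "inj_on e {..<n}" and e: "e ` {..<n} \<subseteq> J"
  shows measurable_marginal_reindex: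
      "(\<lambda>\<omega>. marginal U z n (\<lambda>j. \<omega> (e j))) \<in> borel_measurable (PiM J (\<lambda>_. D))"
    and integrable_marginal_reindex:
      "integrable (PiM J (\<lambda>_. D)) (\<lambda>\<omega>. marginal U z n (\<lambda>j. \<omega> (e j)))"
    and integral_marginal_reindex:
      "(\<integral>\<omega>. marginal U z n (\<lambda>j. \<omega> (e j)) \<partial>PiM J (\<lambda>_. D)) = expected_marginal U D z n"
proof -
  note reindex = measurable_PiM_reindex integral_PiM_reindex
  note reindex = reindex[OF D inj e measurable_marginal[OF U z] marginal_cong]
  show measurable: "(\<lambda>\<omega>. marginal U z n (\<lambda>j. \<omega> (e j))) \<in> borel_measurable (PiM J (\<lambda>_. D))"
    by (rule reindex(1))
  show "(\<integral>\<omega>. marginal U z n (\<lambda>j. \<omega> (e j)) \<partial>PiM J (\<lambda>_. D)) = expected_marginal U D z n"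
    unfolding expected_marginal_def by (rule reindex(2))
  interpret prob_space "PiM J (\<lambda>_. D)"
    using D by (intro prob_space_PiM) auto
  show "integrable (PiM J (\<lambda>_. D)) (\<lambda>\<omega>. marginal U z n (\<lambda>j. \<omega> (e j)))"
  proof (rule integrable_const_bound[where B = 1, OF AE_I2 measurable])
    fix \<omega> assume "\<omega> \<in> space (PiM J (\<lambda>_. D))"
    then have "\<omega> (e j) \<in> space D" if "j < n" for j
      using e that by (auto simp: space_PiM)
    then show "norm (marginal U z n (\<lambda>j. \<omega> (e j))) \<le> 1"
      using abs_marginal_le_1[OF U z] by simp
  qed
qed

lemma nths_map_upt_marginal:
  assumes "I \<subseteq> {..<n}"
  shows "U (nths (map f [0..<n]) I @ [z]) - U (nths (map f [0..<n]) I)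
           = marginal U z (card I) (\<lambda>j. f (nths [0..<n] I ! j))"
proof -
  let ?L = "nths [0..<n] I"
  have "nths (map f [0..<n]) I = map f (map ((!) ?L) [0..<length ?L])"
    by (simp add: nths_map map_nth)
  also have "\<dots> = map (\<lambda>j. f (?L ! j)) [0..<card I]"
    using length_nths_upt[OF assms] by simp
  finally show ?thesis
    unfolding marginal_def by simp
qed

lemma
  assumes D: "prob_space D" and U: "potential D U" and z: "z \<in> space D"
    and I: "I \<subseteq> {..<n}"
  shows integrable_marginal_nths: "integrable (PiM {..<n} (\<lambda>_. D))
      (\<lambda>f. U (nths (map f [0..<n]) I @ [z]) - U (nths (map f [0..<n]) I))"
    and integral_marginal_nths: "(\<integral>f. U (nths (map f [0..<n]) I @ [z]) - U (nths (map f [0..<n]) I)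
      \<partial>PiM {..<n} (\<lambda>_. D)) = expected_marginal U D z (card I)"
proof -
  let ?L = "nths [0..<n] I"
  have inj: "inj_on ((!) ?L) {..<card I}"
    using length_nths_upt[OF I] by (simp add: inj_on_def nth_eq_iff_index_eq)
  have image: "(!) ?L ` {..<card I} \<subseteq> {..<n}"
    using set_nths_upt[OF I] length_nths_upt[OF I] I by (auto dest!: nth_mem)
  note reindex = integrable_marginal_reindex integral_marginal_reindex
  note reindex = reindex[OF D U z inj image]
  show "integrable (PiM {..<n} (\<lambda>_. D))
      (\<lambda>f. U (nths (map f [0..<n]) I @ [z]) - U (nths (map f [0..<n]) I))"
    unfolding nths_map_upt_marginal[OF I] by (rule reindex(1))
  show "(\<integral>f. U (nths (map f [0..<n]) I @ [z]) - U (nths (map f [0..<n]) I)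
      \<partial>PiM {..<n} (\<lambda>_. D)) = expected_marginal U D z (card I)"
    unfolding nths_map_upt_marginal[OF I] by (rule reindex(2))
qed

section \<open>The distributional Shapley value as a mean of expected marginals\<close>

lemma data_shapley_snoc:
  "data_shapley U (xs @ [z]) (length xs) =
     1 / real (Suc (length xs)) * (\<Sum>k\<in>{1..Suc (length xs)}.
       inverse (real (length xs choose (k - 1))) *
       (\<Sum>I | I \<subseteq> {..<length xs} \<and> card I = k - 1. U (nths xs I @ [z]) - U (nths xs I)))"
proof -
  have "{..<Suc (length xs)} - {length xs} = {..<length xs}"
    by auto
  moreover have "U (nths (xs @ [z]) I @ [(xs @ [z]) ! length xs]) - U (nths (xs @ [z]) I)
      = U (nths xs I @ [z]) - U (nths xs I)" if "I \<subseteq> {..<length xs}" for I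
    using nths_append_singleton[OF that] by simp
  ultimately show ?thesis
    unfolding data_shapley_def Let_def by (auto intro!: sum.cong arg_cong2[where f = "(*)"])
qed

lemma dist_shapley_eq_mean_expected_marginal:
  assumes D: "prob_space D" and U: "potential D U" and z: "z \<in> space D" and m: "m \<ge> 1"
  shows "dist_shapley U D m z = (\<Sum>k\<in>{1..m}. expected_marginal U D z (k - 1)) / real m"
proof -
  define n where "n = m - 1"
  have m_eq: "m = Suc n"
    using m by (simp add: n_def)
  define S where "S k = {I. I \<subseteq> {..<n} \<and> card I = k - 1}" for k
  define \<Delta> where "\<Delta> I f = U (nths (map f [0..<n]) I @ [z]) - U (nths (map f [0..<n]) I)" for I f
  let ?M = "PiM {..<n} (\<lambda>_. D)"
  have card_S: "card (S k) = n choose (k - 1)" for k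
    unfolding S_def using n_subsets[of "{..<n}" "k - 1"] by simp
  have integrable_block: "integrable ?M (\<lambda>f. \<Sum>I\<in>S k. \<Delta> I f)" for k
    unfolding \<Delta>_def S_def using integrable_marginal_nths[OF D U z] by auto
  have integral_block:
    "(\<integral>f. (\<Sum>I\<in>S k. \<Delta> I f) \<partial>?M) = real (n choose (k - 1)) * expected_marginal U D z (k - 1)"
    for k
  proof -
    have "(\<integral>f. (\<Sum>I\<in>S k. \<Delta> I f) \<partial>?M) = (\<Sum>I\<in>S k. (\<integral>f. \<Delta> I f \<partial>?M))"
      unfolding \<Delta>_def S_def using integrable_marginal_nths[OF D U z]
      by (intro Bochner_Integration.integral_sum) auto
    also have "\<dots> = (\<Sum>I\<in>S k. expected_marginal U D z (k - 1))"
      unfolding \<Delta>_def S_def using integral_marginal_nths[OF D U z] by (intro sum.cong) auto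
    finally show ?thesis
      by (simp add: card_S)
  qed
  have "dist_shapley U D m z = (\<integral>f. 1 / real m * (\<Sum>k\<in>{1..m}.
      inverse (real (n choose (k - 1))) * (\<Sum>I\<in>S k. \<Delta> I f)) \<partial>?M)"
    unfolding dist_shapley_def S_def \<Delta>_def
    using data_shapley_snoc[of U "map _ [0..<n]" z] by (simp add: m_eq)
  also have "\<dots> = 1 / real m * (\<Sum>k\<in>{1..m}.
      inverse (real (n choose (k - 1))) * (\<integral>f. (\<Sum>I\<in>S k. \<Delta> I f) \<partial>?M))"
    using integrable_block by (simp add: Bochner_Integration.integral_sum)
  also have "\<dots> = 1 / real m * (\<Sum>k\<in>{1..m}. expected_marginal U D z (k - 1))"
    using m_eq by (intro arg_cong2[where f = "(*)"] sum.cong refl) (auto simp: integral_block)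
  finally show ?thesis
    by simp
qed

section \<open>The Monte Carlo estimator\<close>

definition sample_blocks :: "nat \<Rightarrow> (nat \<Rightarrow> nat) \<Rightarrow> (nat \<times> nat) set" where
  "sample_blocks m Tk = Sigma {1..m} (\<lambda>k. {..<Tk k})"

definition sample_marginal ::
  "('z list \<Rightarrow> real) \<Rightarrow> 'z \<Rightarrow> nat \<times> nat \<Rightarrow> (nat \<times> nat \<times> nat \<Rightarrow> 'z) \<Rightarrow> real" where
  "sample_marginal U z p \<omega> = marginal U z (fst p - 1) (\<lambda>j. \<omega> (fst p, snd p, j))"

lemma shapley_estimator_eq_sum:
  "shapley_estimator U m T Tk w z \<omega> =
     (\<Sum>p\<in>sample_blocks m Tk. sample_marginal U z p \<omega> / (real T * (w (fst p) * real m)))"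
proof -
  have "shapley_estimator U m T Tk w z \<omega> =
      (\<Sum>k\<in>{1..m}. \<Sum>t<Tk k. sample_marginal U z (k, t) \<omega> / (real T * (w k * real m)))"
    by (simp add: shapley_estimator_def sample_S_def sample_marginal_def marginal_def sum_distrib_left)
  then show ?thesis
    unfolding sample_blocks_def by (simp add: sum.Sigma split_beta)
qed

lemma sum_sample_blocks:
  fixes f :: "nat \<Rightarrow> real"
  shows "(\<Sum>p\<in>sample_blocks m Tk. f (fst p)) = (\<Sum>k\<in>{1..m}. real (Tk k) * f k)"
proof -
  have "(\<Sum>k\<in>{1..m}. \<Sum>t<Tk k. f k) = (\<Sum>p\<in>sample_blocks m Tk. f (fst p))"
    unfolding sample_blocks_def by (subst sum.Sigma) (auto simp: split_beta)
  then show ?thesis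
    by simp
qed

lemma block_in_sample_index:
  "(k, t) \<in> sample_blocks m Tk \<Longrightarrow> j < k - 1 \<Longrightarrow> (k, t, j) \<in> sample_index m Tk"
  by (simp add: sample_blocks_def sample_index_def)

lemma
  assumes D: "prob_space D" and U: "potential D U" and z: "z \<in> space D"
    and p: "p \<in> sample_blocks m Tk"
  shows integrable_sample_marginal: "integrable (sample_space D m Tk) (sample_marginal U z p)"
    and integral_sample_marginal:
      "(\<integral>\<omega>. sample_marginal U z p \<omega> \<partial>sample_space D m Tk) = expected_marginal U D z (fst p - 1)"
proof -
  obtain k t where p_eq: "p = (k, t)"
    by fastforce
  have inj: "inj_on (\<lambda>j. (k, t, j)) {..<k - 1}"
    by (simp add: inj_on_def)
  have image: "(\<lambda>j. (k, t, j)) ` {..<k - 1} \<subseteq> sample_index m Tk"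
    using block_in_sample_index p unfolding p_eq by blast
  note reindex = integrable_marginal_reindex integral_marginal_reindex
  note reindex = reindex[OF D U z inj image]
  show "integrable (sample_space D m Tk) (sample_marginal U z p)"
    using reindex(1) unfolding p_eq sample_space_def by (simp add: sample_marginal_def[abs_def])
  show "(\<integral>\<omega>. sample_marginal U z p \<omega> \<partial>sample_space D m Tk) = expected_marginal U D z (fst p - 1)"
    using reindex(2) unfolding p_eq sample_space_def by (simp add: sample_marginal_def)
qed

lemma abs_sample_marginal_le_stability:
  assumes "deletion_stable D U \<beta>" and "z \<in> space D" and p: "p \<in> sample_blocks m Tk"
    and \<omega>: "\<omega> \<in> space (sample_space D m Tk)"
  shows "\<bar>sample_marginal U z p \<omega>\<bar> \<le> \<beta> (fst p)"
proof -
  obtain k t where p_eq: "p = (k, t)"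
    by fastforce
  have "k \<ge> 1"
    using p unfolding p_eq sample_blocks_def by simp
  moreover have "\<bar>marginal U z (k - 1) (\<lambda>j. \<omega> (k, t, j))\<bar> \<le> \<beta> (Suc (k - 1))"
  proof (rule abs_marginal_le_stability[OF assms(1,2)])
    fix j assume "j < k - 1"
    with \<omega> show "\<omega> (k, t, j) \<in> space D"
      using block_in_sample_index[OF p[unfolded p_eq]] by (auto simp: sample_space_def space_PiM)
  qed
  ultimately show ?thesis
    unfolding p_eq sample_marginal_def by simp
qed

lemma indep_sample_marginal:
  assumes D: "prob_space D" and U: "potential D U" and z: "z \<in> space D"
  shows "prob_space.indep_vars (sample_space D m Tk) (\<lambda>_. borel) (sample_marginal U z)
           (sample_blocks m Tk)"
  unfolding sample_space_def
proof (rule indep_vars_PiM_blocks[OF D])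
  define K where "K p = (\<lambda>j. (fst p, snd p, j)) ` {..<fst p - 1}" for p :: "nat \<times> nat"
  fix p assume p: "p \<in> sample_blocks m Tk"
  show "K p \<subseteq> sample_index m Tk"
    using p block_in_sample_index by (cases p) (auto simp: K_def)
  have "inj_on (\<lambda>j. (fst p, snd p, j)) {..<fst p - 1}"
    by (simp add: inj_on_def)
  from measurable_marginal_reindex[OF D U z this]
  show "(\<lambda>g. marginal U z (fst p - 1) (\<lambda>j. g (fst p, snd p, j)))
      \<in> borel_measurable (PiM (K p) (\<lambda>_. D))"
    by (simp add: K_def)
  fix \<omega>
  show "sample_marginal U z p \<omega>
      = marginal U z (fst p - 1) (\<lambda>j. restrict \<omega> (K p) (fst p, snd p, j))"
    unfolding sample_marginal_def by (rule marginal_cong) (simp add: K_def)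
next
  show "disjoint_family_on (\<lambda>p. (\<lambda>j. (fst p, snd p, j)) ` {..<fst p - 1})
      (sample_blocks m Tk)"
    by (auto simp: disjoint_family_on_def)
qed

lemma integral_shapley_estimator:
  assumes D: "prob_space D" and U: "potential D U" and z: "z \<in> space D" and m: "m \<ge> 1"
    and w_pos: "\<And>k. k \<in> {1..m} \<Longrightarrow> w k > 0" and T_pos: "T > 0"
    and Tk: "\<And>k. k \<in> {1..m} \<Longrightarrow> real (Tk k) = w k * real T"
  shows "(\<integral>\<omega>. shapley_estimator U m T Tk w z \<omega> \<partial>sample_space D m Tk) = dist_shapley U D m z"
proof -
  have "(\<integral>\<omega>. shapley_estimator U m T Tk w z \<omega> \<partial>sample_space D m Tk)
      = (\<Sum>p\<in>sample_blocks m Tk.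
          expected_marginal U D z (fst p - 1) / (real T * (w (fst p) * real m)))"
    unfolding shapley_estimator_eq_sum
    using integrable_sample_marginal[OF D U z] integral_sample_marginal[OF D U z]
    by (simp add: Bochner_Integration.integral_sum)
  also have "\<dots> = (\<Sum>k\<in>{1..m}.
      real (Tk k) * (expected_marginal U D z (k - 1) / (real T * (w k * real m))))"
    by (rule sum_sample_blocks)
  also have "\<dots> = (\<Sum>k\<in>{1..m}. expected_marginal U D z (k - 1) / real m)"
  proof (rule sum.cong[OF refl])
    fix k assume k: "k \<in> {1..m}"
    then show "real (Tk k) * (expected_marginal U D z (k - 1) / (real T * (w k * real m)))
        = expected_marginal U D z (k - 1) / real m"
      using w_pos[OF k] T_pos by (simp add: Tk[OF k] field_simps)
  qed
  also have "\<dots> = dist_shapley U D m z"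
    by (simp add: dist_shapley_eq_mean_expected_marginal[OF D U z m] sum_divide_distrib)
  finally show ?thesis .
qed

lemma measurable_shapley_estimator:
  assumes "prob_space D" and "potential D U" and "z \<in> space D"
  shows "shapley_estimator U m T Tk w z \<in> borel_measurable (sample_space D m Tk)"
  unfolding shapley_estimator_eq_sum[abs_def]
  using integrable_sample_marginal[OF assms] by (intro borel_measurable_sum) auto

lemma shapley_estimator_deviation:
  assumes D: "prob_space D" and U: "potential D U" and stable: "deletion_stable D U \<beta>"
    and z: "z \<in> space D" and m: "m \<ge> 1"
    and w_pos: "\<And>k. k \<in> {1..m} \<Longrightarrow> w k > 0" and T_pos: "T > 0"
    and Tk: "\<And>k. k \<in> {1..m} \<Longrightarrow> real (Tk k) = w k * real T"
    and \<epsilon>: "\<epsilon> > 0"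
    and T_large: "2 * L / (\<epsilon>\<^sup>2 * (real m)\<^sup>2) * (\<Sum>k\<in>{1..m}. (\<beta> k)\<^sup>2 / w k) \<le> real T"
  shows "measure (sample_space D m Tk) {\<omega> \<in> space (sample_space D m Tk).
           \<epsilon> < \<bar>shapley_estimator U m T Tk w z \<omega> - dist_shapley U D m z\<bar>} \<le> 2 * exp (- L)"
proof -
  let ?M = "sample_space D m Tk" and ?P = "sample_blocks m Tk"
  let ?scale = "\<lambda>p :: nat \<times> nat. real T * (w (fst p) * real m)"
  define X where "X p \<omega> = sample_marginal U z p \<omega> / ?scale p" for p \<omega>
  define c where "c p = \<beta> (fst p) / ?scale p" for p
  interpret prob_space ?M
    unfolding sample_space_def using D by (intro prob_space_PiM) auto
  have scale_pos: "?scale p > 0" if "p \<in> ?P" for p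
    using that w_pos T_pos m by (auto simp: sample_blocks_def)
  have indep: "indep_vars (\<lambda>_. borel) X ?P"
    unfolding X_def using indep_sample_marginal[OF D U z]
    by (rule indep_vars_compose2[where Y = "\<lambda>p x. x / ?scale p"]) simp
  have bound: "\<bar>X p \<omega>\<bar> \<le> c p" if "p \<in> ?P" "\<omega> \<in> space ?M" for p \<omega>
    using abs_sample_marginal_le_stability[OF stable z that] scale_pos[OF that(1)]
    by (simp add: X_def c_def abs_divide divide_right_mono)
  have "(\<Sum>p\<in>?P. (c p)\<^sup>2) = (\<Sum>k\<in>{1..m}. real (Tk k) * (\<beta> k / (real T * (w k * real m)))\<^sup>2)"
    unfolding c_def by (rule sum_sample_blocks)
  also have "\<dots> = (\<Sum>k\<in>{1..m}. (\<beta> k)\<^sup>2 / w k) / (real T * (real m)\<^sup>2)"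
    unfolding sum_divide_distrib
  proof (rule sum.cong[OF refl])
    fix k assume k: "k \<in> {1..m}"
    then show "real (Tk k) * (\<beta> k / (real T * (w k * real m)))\<^sup>2
        = (\<beta> k)\<^sup>2 / w k / (real T * (real m)\<^sup>2)"
      using w_pos[OF k] T_pos by (simp add: Tk[OF k] power2_eq_square field_simps)
  qed
  finally have sum_c: "(\<Sum>p\<in>?P. (c p)\<^sup>2) = (\<Sum>k\<in>{1..m}. (\<beta> k)\<^sup>2 / w k) / (real T * (real m)\<^sup>2)" .
  have "2 * L * (\<Sum>k\<in>{1..m}. (\<beta> k)\<^sup>2 / w k) \<le> real T * (\<epsilon>\<^sup>2 * (real m)\<^sup>2)"
    using T_large \<epsilon> m by (simp add: field_simps)
  then have L: "2 * (\<Sum>p\<in>?P. (c p)\<^sup>2) * L \<le> \<epsilon>\<^sup>2"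
    unfolding sum_c using T_pos m by (simp add: field_simps)
  have "finite ?P"
    by (simp add: sample_blocks_def)
  note Hoeffding = Hoeffding_ineq_abs_bounded[OF this indep bound \<epsilon> L]
  have sum_X: "(\<Sum>p\<in>?P. X p \<omega>) = shapley_estimator U m T Tk w z \<omega>" for \<omega>
    by (simp add: X_def shapley_estimator_eq_sum)
  have "(\<Sum>p\<in>?P. expectation (X p)) = expectation (\<lambda>\<omega>. \<Sum>p\<in>?P. X p \<omega>)"
    unfolding X_def using integrable_sample_marginal[OF D U z]
    by (intro Bochner_Integration.integral_sum[symmetric]) auto
  also have "\<dots> = dist_shapley U D m z"
    unfolding sum_X using integral_shapley_estimator[OF D U z m w_pos T_pos Tk] by simp
  finally have "prob {\<omega> \<in> space ?M. \<epsilon> \<le> \<bar>shapley_estimator U m T Tk w z \<omega> - dist_shapley U D m z\<bar>}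
      \<le> 2 * exp (- L)"
    using Hoeffding by (simp only: sum_X)
  moreover have "prob {\<omega> \<in> space ?M. \<epsilon> < \<bar>shapley_estimator U m T Tk w z \<omega> - dist_shapley U D m z\<bar>}
      \<le> prob {\<omega> \<in> space ?M. \<epsilon> \<le> \<bar>shapley_estimator U m T Tk w z \<omega> - dist_shapley U D m z\<bar>}"
    using measurable_shapley_estimator[OF D U z]
    by (intro finite_measure_mono) (auto, measurable)
  ultimately show ?thesis
    by linarith
qed

lemma shapley_estimator_uniform_accuracy:
  assumes D: "prob_space D" and U: "potential D U" and stable: "deletion_stable D U \<beta>"
    and Z: "finite Z" "Z \<noteq> {}" "Z \<subseteq> space D" and \<epsilon>: "\<epsilon> > 0" and \<delta>: "\<delta> > 0"
    and m: "m \<ge> 1" and w_pos: "\<And>k. k \<in> {1..m} \<Longrightarrow> w k > 0" and T_pos: "T > 0"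
    and Tk: "\<And>k. k \<in> {1..m} \<Longrightarrow> real (Tk k) = w k * real T"
    and T_large: "2 * ln (2 * real (card Z) / \<delta>) / (\<epsilon>\<^sup>2 * (real m)\<^sup>2)
                    * (\<Sum>k\<in>{1..m}. (\<beta> k)\<^sup>2 / w k) \<le> real T"
  shows "1 - \<delta> \<le> measure (sample_space D m Tk) {\<omega> \<in> space (sample_space D m Tk).
           \<forall>z\<in>Z. \<bar>shapley_estimator U m T Tk w z \<omega> - dist_shapley U D m z\<bar> \<le> \<epsilon>}"
proof -
  interpret prob_space "sample_space D m Tk"
    unfolding sample_space_def using D by (intro prob_space_PiM) auto
  have N: "real (card Z) > 0"
    using Z(1,2) by (simp add: card_gt_0_iff)
  have zD: "z \<in> space D" if "z \<in> Z" for z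
    using that Z(3) by blast
  have "prob {\<omega> \<in> space (sample_space D m Tk).
      \<not> \<bar>shapley_estimator U m T Tk w z \<omega> - dist_shapley U D m z\<bar> \<le> \<epsilon>} \<le> \<delta> / real (card Z)"
    if "z \<in> Z" for z
  proof -
    note deviation = shapley_estimator_deviation[OF D U stable zD[OF that] m w_pos T_pos Tk \<epsilon> T_large]
    have "2 * real (card Z) / \<delta> > 0"
      using N \<delta> by simp
    then have "2 * exp (- ln (2 * real (card Z) / \<delta>)) = \<delta> / real (card Z)"
      by (simp add: exp_minus)
    with deviation show ?thesis
      by (simp add: not_le)
  qed
  then have "(\<Sum>z\<in>Z. prob {\<omega> \<in> space (sample_space D m Tk).
      \<not> \<bar>shapley_estimator U m T Tk w z \<omega> - dist_shapley U D m z\<bar> \<le> \<epsilon>}) \<le> \<delta>"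
    using sum_mono[of Z _ "\<lambda>_. \<delta> / real (card Z)"] N by simp
  moreover have events: "{\<omega> \<in> space (sample_space D m Tk).
      \<bar>shapley_estimator U m T Tk w z \<omega> - dist_shapley U D m z\<bar> \<le> \<epsilon>} \<in> events" if "z \<in> Z" for z
    using measurable_shapley_estimator[OF D U zD[OF that]] by measurable
  ultimately show ?thesis
    using prob_all_ge_one_minus_sum[
        where P = "\<lambda>z \<omega>. \<bar>shapley_estimator U m T Tk w z \<omega> - dist_shapley U D m z\<bar> \<le> \<epsilon>",
        OF Z(1) events]
    by linarith
qed

theorem theoremE1:
  fixes D :: "'z measure" and U :: "'z list \<Rightarrow> real" and \<beta> :: "nat \<Rightarrow> real"
    and m T :: nat and Tk :: "nat \<Rightarrow> nat" and w :: "nat \<Rightarrow> real"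
    and Z :: "'z set" and \<epsilon> \<delta> :: real
  assumes D: "prob_space D"
    and U: "potential D U"
    and \<beta>_mono: "antimono \<beta>" and \<beta>_range: "\<And>k. 0 \<le> \<beta> k \<and> \<beta> k \<le> 1"
    and stable: "deletion_stable D U \<beta>"
    and Z: "finite Z" "Z \<noteq> {}" "Z \<subseteq> space D"
    and \<epsilon>: "\<epsilon> > 0" and \<delta>: "0 < \<delta>" "\<delta> < 1"
    and w_pos: "\<And>k. k \<in> {1..m} \<Longrightarrow> w k > 0"
    and w_sum: "(\<Sum>k\<in>{1..m}. w k) = 1"
    and T_pos: "T > 0"
    and Tk: "\<And>k. k \<in> {1..m} \<Longrightarrow> real (Tk k) = w k * real T"
  shows "(\<forall>z\<in>Z. (\<integral>\<omega>. shapley_estimator U m T Tk w z \<omega> \<partial>(sample_space D m Tk))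
                  = dist_shapley U D m z)
       \<and> (real T \<ge> 2 * ln (2 * real (card Z) / \<delta>) / (\<epsilon>\<^sup>2 * (real m)\<^sup>2)
                      * (\<Sum>k\<in>{1..m}. (\<beta> k)\<^sup>2 / w k)
          \<longrightarrow> measure (sample_space D m Tk)
                {\<omega> \<in> space (sample_space D m Tk).
                   \<forall>z\<in>Z. \<bar>shapley_estimator U m T Tk w z \<omega> - dist_shapley U D m z\<bar> \<le> \<epsilon>}
              \<ge> 1 - \<delta>)"
proof -
  have m: "m \<ge> 1"
    using w_sum by (cases "m = 0") auto
  have "\<forall>z\<in>Z. (\<integral>\<omega>. shapley_estimator U m T Tk w z \<omega> \<partial>(sample_space D m Tk))
      = dist_shapley U D m z"
    using integral_shapley_estimator[OF D U _ m w_pos T_pos Tk] Z(3) by (simp add: subset_iff)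
  moreover have "1 - \<delta> \<le> measure (sample_space D m Tk) {\<omega> \<in> space (sample_space D m Tk).
      \<forall>z\<in>Z. \<bar>shapley_estimator U m T Tk w z \<omega> - dist_shapley U D m z\<bar> \<le> \<epsilon>}"
    if "2 * ln (2 * real (card Z) / \<delta>) / (\<epsilon>\<^sup>2 * (real m)\<^sup>2) * (\<Sum>k\<in>{1..m}. (\<beta> k)\<^sup>2 / w k)
          \<le> real T"
    by (rule shapley_estimator_uniform_accuracy[OF D U stable Z \<epsilon> \<delta>(1) m])
      (fact w_pos T_pos Tk that)+
  ultimately show ?thesis
    by blast
qed

end
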